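(* In the setting described in the context, every feasible solution of RLO-CCU-SD satisfies $\Gamma\in\Theta$ and $\Gamma_{\hat{i}}=\underline{\Gamma}_{\hat{i}}$ for some $\hat{i}\in\hat{I}$. Conversely, if $\sum_{j\in J}a_{ij}\hat{x}_j\ge b_i$ for all $i\in I$, then for every $\Gamma\in\Theta$ satisfying $\Gamma_{\hat{i}}=\underline{\Gamma}_{\hat{i}}$ for some $\hat{i}\in\hat{I}$ there exists $(c,u,y,z,\pi,\varphi,\lambda,\mu)$ such that $(\Gamma,c,u,y,z,\pi,\varphi,\lambda,\mu)$ is feasible for RLO-CCU-SD.
   Context: Let $I=\{1,\dots,m\}$, $J=\{1,\dots,n\}$. Given are $a_{ij}\in\mathbb{R}$, $b\in\mathbb{R}^m$, index sets $J_i\subseteq J$, nonnegative numbers $\alpha_{ij}$ ($j\in J_i,i\in I$), an observed point $\hat{x}\in\mathbb{R}^n$, a prior $\hat{\Gamma}\in\mathbb{R}^m$ and a norm $\|\cdot\|$ on $\mathbb{R}^m$. For $i\in I$ and $x\in\mathbb{R}^n$ let $j^i_1(x),\dots,j^i_{|J_i|}(x)$ order $J_i$ so that $\alpha_{ij^i_k(x)}|x_{j^i_k(x)}|$ is the $k$-th largest element of $\{\alpha_{ij}|x_j|\}_{j\in J_i}$, and for $\Gamma_i\in[0,|J_i|]$ let $P_i(\Gamma_i,x)=\sum_{k=1}^{\lfloor\Gamma_i\rfloor}\alpha_{ij^i_k(x)}|x_{j^i_k(x)}|+(\Gamma_i-\lfloor\Gamma_i\rfloor)\alpha_{ij^i_{\lceil\Gamma_i\rceil}(x)}|x_{j^i_{\lceil\Gamma_i\rceil}(x)}|$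 (last term $0$ for integer $\Gamma_i$). Let $s_i=\sum_{j\in J}a_{ij}\hat{x}_j-b_i$, $\hat{I}=\{i\in I:0\le s_i\le\sum_{j\in J_i}\alpha_{ij}|\hat{x}_j|\}$, and for $i\in\hat{I}$ let $\underline{\Gamma}_i=\min\{\sum_{j\in J_i}w_j:\sum_{j\in J_i}\alpha_{ij}|\hat{x}_j|w_j=s_i,\ 0\le w_j\le1\}$, so $s_i=P_i(\underline{\Gamma}_i,\hat{x})$. Standing assumption: for each $i\in\hat{I}$, $\underline{\Gamma}_i$ is the unique $\Gamma_i\in[0,|J_i|]$ with $s_i=P_i(\Gamma_i,\hat{x})$. Let $\Theta=\{\Gamma\in\mathbb{R}^m:\Gamma_i\in[0,\underline{\Gamma}_i]\ \forall i\in\hat{I};\ \Gamma_i\in[0,|J_i|]\ \forall i\in I\setminus\hat{I}\}$. The problem RLO-CCU-SD is \[ \min_{\Gamma,c,u,y,z,\pi,\varphi,\lambda,\mu}\ \|\Gamma-\hat{\Gamma}\| \] subject to: $\sum_{j\in J}c_j\hat{x}_j-\sum_{i\in I}b_i\pi_i=0$; $\alpha_{ij}\hat{x}_j+u_{ij}\ge0$ and $-\alpha_{ij}\hat{x}_j+u_{ij}\ge0$ ($j\in J_i,i\in I$); $y_{ij}+z_i\ge u_{ij}$ ($j\in J_i,i\in I$); $\sum_{j\in J}a_{ij}\hat{x}_j-\sum_{j\in J_i}y_{ij}-\Gamma_iz_i\ge b_i$ ($i\in I$); $y_{ij},z_i\ge0$; $0\le\Gamma_i\le|J_i|$ ($i\in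 I$); $\sum_{i\in I}\pi_i=1$; $\sum_{i\in I}a_{ij}\pi_i+\sum_{i\in I:j\in J_i}\alpha_{ij}(\lambda_{ij}-\mu_{ij})=c_j$ ($j\in J$); $\varphi_{ij}\le\pi_i$ and $\varphi_{ij}=\lambda_{ij}+\mu_{ij}$ ($j\in J_i,i\in I$); $\sum_{j\in J_i}\varphi_{ij}\le\Gamma_i\pi_i$ ($i\in I$); $\pi_i,\varphi_{ij},\lambda_{ij},\mu_{ij}\ge0$ ($j\in J_i,i\in I$). *)

theory Defs
  imports Complex_Main
begin

text \<open>Index sets: I = {1..m}, J = {1..n}. Data: a :: nat => nat => real (a i j),
  b :: nat => real, Js :: nat => nat set (J_i), al :: nat => nat => real (alpha_ij),
  xh :: nat => real (observed point).\<close>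

text \<open>P_i(Gamma_i, x): the values al_ij |x_j| (j in J_i) sorted in nonincreasing order
  v_1 >= v_2 >= ... ; P = v_1 + ... + v_floor(G) + (G - floor G) * v_ceil(G)
  (last term 0 for integer G). Lists are 0-indexed, so v_k is v ! (k-1).\<close>
definition Pval :: "(nat \<Rightarrow> real) \<Rightarrow> nat set \<Rightarrow> real \<Rightarrow> (nat \<Rightarrow> real) \<Rightarrow> real" where
  "Pval al Ji g x =
     (let v = rev (sort (map (\<lambda>j. al j * \<bar>x j\<bar>) (sorted_list_of_set Ji))) in
      (\<Sum>k<nat \<lfloor>g\<rfloor>. v ! k)
      + (if g = of_int \<lfloor>g\<rfloor> then 0 else (g - of_int \<lfloor>g\<rfloor>) * v ! (nat \<lceil>g\<rceil> - 1)))"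

definition slack :: "nat \<Rightarrow> (nat \<Rightarrow> nat \<Rightarrow> real) \<Rightarrow> (nat \<Rightarrow> real) \<Rightarrow> (nat \<Rightarrow> real) \<Rightarrow> nat \<Rightarrow> real" where
  "slack n a b xh i = (\<Sum>j\<in>{1..n}. a i j * xh j) - b i"

definition Ihat :: "nat \<Rightarrow> nat \<Rightarrow> (nat \<Rightarrow> nat \<Rightarrow> real) \<Rightarrow> (nat \<Rightarrow> real) \<Rightarrow> (nat \<Rightarrow> nat set)
    \<Rightarrow> (nat \<Rightarrow> nat \<Rightarrow> real) \<Rightarrow> (nat \<Rightarrow> real) \<Rightarrow> nat set" where
  "Ihat m n a b Js al xh = {i \<in> {1..m}. 0 \<le> slack n a b xh i \<and>
       slack n a b xh i \<le> (\<Sum>j\<in>Js i. al i j * \<bar>xh j\<bar>)}"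

definition Gamma_low :: "nat \<Rightarrow> (nat \<Rightarrow> nat \<Rightarrow> real) \<Rightarrow> (nat \<Rightarrow> real) \<Rightarrow> (nat \<Rightarrow> nat set)
    \<Rightarrow> (nat \<Rightarrow> nat \<Rightarrow> real) \<Rightarrow> (nat \<Rightarrow> real) \<Rightarrow> nat \<Rightarrow> real" where
  "Gamma_low n a b Js al xh i =
     Inf {(\<Sum>j\<in>Js i. w j) | w.
            (\<Sum>j\<in>Js i. al i j * \<bar>xh j\<bar> * w j) = slack n a b xh i \<and>
            (\<forall>j\<in>Js i. 0 \<le> w j \<and> w j \<le> 1)}"

definition in_Theta :: "nat \<Rightarrow> nat \<Rightarrow> (nat \<Rightarrow> nat \<Rightarrow> real) \<Rightarrow> (nat \<Rightarrow> real) \<Rightarrow> (nat \<Rightarrow> nat set)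
    \<Rightarrow> (nat \<Rightarrow> nat \<Rightarrow> real) \<Rightarrow> (nat \<Rightarrow> real) \<Rightarrow> (nat \<Rightarrow> real) \<Rightarrow> bool" where
  "in_Theta m n a b Js al xh G \<longleftrightarrow>
     (\<forall>i\<in>{1..m}. 0 \<le> G i \<and> G i \<le> real (card (Js i)) \<and>
        (i \<in> Ihat m n a b Js al xh \<longrightarrow> G i \<le> Gamma_low n a b Js al xh i))"

text \<open>Feasibility for RLO-CCU-SD (the objective norm is irrelevant for feasibility).\<close>
definition feasible :: "nat \<Rightarrow> nat \<Rightarrow> (nat \<Rightarrow> nat \<Rightarrow> real) \<Rightarrow> (nat \<Rightarrow> real) \<Rightarrow> (nat \<Rightarrow> nat set)
    \<Rightarrow> (nat \<Rightarrow> nat \<Rightarrow> real) \<Rightarrow> (nat \<Rightarrow> real)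
    \<Rightarrow> (nat \<Rightarrow> real) \<Rightarrow> (nat \<Rightarrow> real) \<Rightarrow> (nat \<Rightarrow> nat \<Rightarrow> real) \<Rightarrow> (nat \<Rightarrow> nat \<Rightarrow> real)
    \<Rightarrow> (nat \<Rightarrow> real) \<Rightarrow> (nat \<Rightarrow> real) \<Rightarrow> (nat \<Rightarrow> nat \<Rightarrow> real) \<Rightarrow> (nat \<Rightarrow> nat \<Rightarrow> real)
    \<Rightarrow> (nat \<Rightarrow> nat \<Rightarrow> real) \<Rightarrow> bool" where
  "feasible m n a b Js al xh G c u y z p phi lam mu \<longleftrightarrow>
     (\<Sum>j\<in>{1..n}. c j * xh j) - (\<Sum>i\<in>{1..m}. b i * p i) = 0
   \<and> (\<forall>i\<in>{1..m}. \<forall>j\<in>Js i. al i j * xh j + u i j \<ge> 0 \<and> - al i j * xh j + u i j \<ge> 0)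
   \<and> (\<forall>i\<in>{1..m}. \<forall>j\<in>Js i. y i j + z i \<ge> u i j)
   \<and> (\<forall>i\<in>{1..m}. (\<Sum>j\<in>{1..n}. a i j * xh j) - (\<Sum>j\<in>Js i. y i j) - G i * z i \<ge> b i)
   \<and> (\<forall>i\<in>{1..m}. \<forall>j\<in>Js i. y i j \<ge> 0)
   \<and> (\<forall>i\<in>{1..m}. z i \<ge> 0)
   \<and> (\<forall>i\<in>{1..m}. 0 \<le> G i \<and> G i \<le> real (card (Js i)))
   \<and> (\<Sum>i\<in>{1..m}. p i) = 1
   \<and> (\<forall>j\<in>{1..n}. (\<Sum>i\<in>{1..m}. a i j * p i)
          + (\<Sum>i\<in>{i\<in>{1..m}. j \<in> Js i}. al i j * (lam i j - mu i j)) = c j)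
   \<and> (\<forall>i\<in>{1..m}. \<forall>j\<in>Js i. phi i j \<le> p i \<and> phi i j = lam i j + mu i j)
   \<and> (\<forall>i\<in>{1..m}. (\<Sum>j\<in>Js i. phi i j) \<le> G i * p i)
   \<and> (\<forall>i\<in>{1..m}. p i \<ge> 0)
   \<and> (\<forall>i\<in>{1..m}. \<forall>j\<in>Js i. phi i j \<ge> 0 \<and> lam i j \<ge> 0 \<and> mu i j \<ge> 0)"

end

theory Submission
  imports Defs "HOL-Library.Multiset"
begin

text \<open>For nonnegative weights w, the paper's P(g) (here top_sum) is the common optimal value of
  max {\<Sum>j w_j phi_j : 0 \<le> phi \<le> 1, \<Sum>j phi_j \<le> g} and of its dual
  min {\<Sum>j y_j + g z : y, z \<ge> 0, y_j + z \<ge> w_j}; it is continuous and nondecreasing in g.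
  So the constraints on (u, y, z) are solvable in row i iff P_i(Gamma_i) \<le> s_i, and for i in Ihat,
  where uniqueness makes Gamma_low_i the only root of P_i(g) = s_i, this means Gamma_i \<le> Gamma_low_i.
  The remaining constraints are the dual of the robust problem. Weak duality in every row gives
  c.xh - b.pi \<ge> \<Sum>i pi_i (s_i - P_i(Gamma_i)), a sum of nonnegative terms; the constraint
  c.xh = b.pi forces it to vanish, so some row with pi_i > 0 is tight, which puts it in Ihat with
  Gamma_i = Gamma_low_i. Conversely, a tight row yields a dual solution: pi is the unit vector at
  that row and phi an optimal solution of its maximisation problem.\<close>

lemma exists_zero_of_weighted_sum_nonpos:
  fixes p f :: "'a \<Rightarrow> real"
  assumes "finite A" "\<forall>i\<in>A. 0 \<le> p i \<and> 0 \<le> f i" "sum p A = 1" "(\<Sum>i\<in>A. p i * f i) \<le> 0"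
  shows "\<exists>i\<in>A. 0 < p i \<and> f i = 0"
proof -
  have terms_nonneg: "\<forall>i\<in>A. 0 \<le> p i * f i" using assms(2) by simp
  then have "0 \<le> (\<Sum>i\<in>A. p i * f i)" by (simp add: sum_nonneg)
  then have "(\<Sum>i\<in>A. p i * f i) = 0" using assms(4) by linarith
  then have "\<forall>i\<in>A. p i * f i = 0"
    using sum_nonneg_eq_0_iff[OF assms(1), of "\<lambda>i. p i * f i"] terms_nonneg by blast
  moreover obtain i where "i \<in> A" "p i \<noteq> 0"
    using sum.not_neutral_contains_not_neutral assms(3) by (metis zero_neq_one)
  ultimately show ?thesis using assms(2) by force
qed

lemma neg_mult_diff_le_abs_mult_add:
  fixes t l r :: real
  assumes "0 \<le> l" "0 \<le> r"
  shows "- (t * (l - r)) \<le> \<bar>t\<bar> * (l + r)"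
proof -
  have "t * r \<le> \<bar>t\<bar> * r" using assms by (intro mult_right_mono) auto
  moreover have "(- t) * l \<le> \<bar>t\<bar> * l" using assms by (intro mult_right_mono) auto
  ultimately show ?thesis by (simp add: algebra_simps)
qed

section \<open>Sums of the largest values\<close>

definition ramp :: "real \<Rightarrow> nat \<Rightarrow> real" where
  "ramp g k = min 1 (max 0 (g - real k))"

definition desc_values :: "('a::linorder \<Rightarrow> real) \<Rightarrow> 'a set \<Rightarrow> real list" where
  "desc_values w J = rev (sort (map w (sorted_list_of_set J)))"

text \<open>The sum of the \<lfloor>g\<rfloor> largest values of w on J plus the fraction g - \<lfloor>g\<rfloor> of the next one,
  i.e. Pval written without floor and ceiling (see Pval_eq_top_sum).\<close>
definition top_sum :: "('a::linorder \<Rightarrow> real) \<Rightarrow> 'a set \<Rightarrow> real \<Rightarrow> real" where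
  "top_sum w J g = (\<Sum>k<card J. desc_values w J ! k * ramp g k)"

lemma ramp_bounds: "0 \<le> ramp g k" "ramp g k \<le> 1"
  by (auto simp: ramp_def)

lemma ramp_mono: "g \<le> g' \<Longrightarrow> ramp g k \<le> ramp g' k"
  by (auto simp: ramp_def)

lemma sum_ramp: "0 \<le> g \<Longrightarrow> (\<Sum>k<N. ramp g k) = min g (real N)"
  by (induction N) (auto simp: ramp_def)

lemma length_desc_values [simp]: "length (desc_values w J) = card J"
  by (simp add: desc_values_def)

lemma desc_values_enumeration:
  assumes "finite J"
  obtains js where "distinct js" "set js = J" "desc_values w J = map w js"
proof -
  let ?L = "sorted_list_of_set J"
  have "sort (map w ?L) = map w (sort_key w ?L)"
    by (rule properties_for_sort) (simp_all add: mset_map)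
  with assms show ?thesis
    by (intro that[of "rev (sort_key w ?L)"]) (simp_all add: desc_values_def rev_map)
qed

lemma sum_over_enumeration:
  "distinct js \<Longrightarrow> set js = J \<Longrightarrow> (\<Sum>j\<in>J. f j) = (\<Sum>k<length js. f (js ! k))"
  by (metis bij_betw_nth sum.reindex_bij_betw)

lemma desc_values_antimono:
  assumes "i \<le> k" "k < card J"
  shows "desc_values w J ! k \<le> desc_values w J ! i"
proof -
  let ?s = "sort (map w (sorted_list_of_set J))"
  have "?s ! (card J - Suc k) \<le> ?s ! (card J - Suc i)"
    by (rule sorted_nth_mono) (use assms in auto)
  then show ?thesis using assms by (simp add: desc_values_def rev_nth)
qed

lemma desc_values_nonneg:
  assumes "finite J" "\<forall>j\<in>J. 0 \<le> w j" "k < card J"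
  shows "0 \<le> desc_values w J ! k"
proof -
  obtain js where js: "distinct js" "set js = J" "desc_values w J = map w js"
    using desc_values_enumeration[OF assms(1)] .
  then have "length js = card J" using length_desc_values[of w J] by simp
  with js assms show ?thesis by auto
qed

lemma top_sum_floor_form:
  assumes "0 \<le> g" "g \<le> real (card J)"
  shows "top_sum w J g = (\<Sum>k<nat \<lfloor>g\<rfloor>. desc_values w J ! k)
    + (if nat \<lfloor>g\<rfloor> < card J then (g - of_int \<lfloor>g\<rfloor>) * desc_values w J ! nat \<lfloor>g\<rfloor> else 0)"
proof -
  let ?v = "desc_values w J" and ?f = "\<lambda>k. desc_values w J ! k * ramp g k"
  define K where "K = nat \<lfloor>g\<rfloor>"
  have K: "real K \<le> g" "g < real K + 1" "real K = of_int \<lfloor>g\<rfloor>"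
    using assms(1) unfolding K_def by linarith+
  have ramp_below: "ramp g k = 1" if "k < K" for k
  proof -
    have "real k + 1 \<le> real K" using that by linarith
    then show ?thesis using K(1) by (simp add: ramp_def)
  qed
  have ramp_above: "ramp g k = 0" if "K < k" for k
  proof -
    have "real K + 1 \<le> real k" using that by linarith
    then show ?thesis using K(2) by (simp add: ramp_def)
  qed
  have head: "(\<Sum>k<K. ?f k) = (\<Sum>k<K. ?v ! k)" by (rule sum.cong) (simp_all add: ramp_below)
  have "top_sum w J g = (\<Sum>k<K. ?v ! k) + (if K < card J then (g - real K) * ?v ! K else 0)"
  proof (cases "K < card J")
    case True
    have split: "{..<card J} = {..<Suc K} \<union> {Suc K..<card J}" using True by auto
    have "(\<Sum>k<card J. ?f k) = (\<Sum>k<Suc K. ?f k) + (\<Sum>k\<in>{Suc K..<card J}. ?f k)"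
      unfolding split by (rule sum.union_disjoint) auto
    also have "(\<Sum>k\<in>{Suc K..<card J}. ?f k) = 0" by (simp add: ramp_above)
    finally show ?thesis using True K(1,2) by (simp add: top_sum_def head ramp_def)
  next
    case False
    then have "card J = K" using K assms(2) by linarith
    then show ?thesis using head by (simp add: top_sum_def)
  qed
  then show ?thesis unfolding K_def K(3)[unfolded K_def] .
qed

lemma Pval_eq_top_sum:
  assumes "0 \<le> g" "g \<le> real (card J)"
  shows "Pval al J g x = top_sum (\<lambda>j. al j * \<bar>x j\<bar>) J g"
proof (cases "g = of_int \<lfloor>g\<rfloor>")
  case True
  then show ?thesis by (simp add: Pval_def top_sum_floor_form[OF assms] desc_values_def)
next
  case False
  then have "\<lceil>g\<rceil> = \<lfloor>g\<rfloor> + 1" by (simp add: ceiling_altdef)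
  then have "nat \<lceil>g\<rceil> - 1 = nat \<lfloor>g\<rfloor>" using assms(1) by simp
  moreover have "nat \<lfloor>g\<rfloor> < card J" using False assms by linarith
  ultimately show ?thesis
    using False by (simp add: Pval_def top_sum_floor_form[OF assms] desc_values_def Let_def)
qed

lemma top_sum_mono:
  assumes "finite J" "\<forall>j\<in>J. 0 \<le> w j" "g \<le> g'"
  shows "top_sum w J g \<le> top_sum w J g'"
  unfolding top_sum_def
  by (rule sum_mono) (use assms desc_values_nonneg ramp_mono in \<open>auto intro!: mult_left_mono\<close>)

lemma continuous_on_top_sum: "continuous_on S (top_sum w J)"
  unfolding top_sum_def ramp_def by (intro continuous_intros)

lemma top_sum_0 [simp]: "top_sum w J 0 = 0"
  by (simp add: top_sum_def ramp_def)

lemma top_sum_card: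
  assumes "finite J"
  shows "top_sum w J (real (card J)) = (\<Sum>j\<in>J. w j)"
proof -
  obtain js where js: "distinct js" "set js = J" "desc_values w J = map w js"
    using desc_values_enumeration[OF assms] .
  then have l: "length js = card J" using length_desc_values[of w J] by simp
  have "top_sum w J (real (card J)) = (\<Sum>k<card J. desc_values w J ! k)"
    unfolding top_sum_def by (rule sum.cong) (auto simp: ramp_def)
  also have "\<dots> = (\<Sum>j\<in>J. w j)" using js l by (simp add: sum_over_enumeration)
  finally show ?thesis .
qed

lemma top_sum_le_sum:
  assumes "finite J" "\<forall>j\<in>J. 0 \<le> w j" "g \<le> real (card J)"
  shows "top_sum w J g \<le> (\<Sum>j\<in>J. w j)"
  using top_sum_mono[OF assms] top_sum_card[OF assms(1)] by simp

lemma top_sum_nonneg: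
  assumes "finite J" "\<forall>j\<in>J. 0 \<le> w j" "0 \<le> g"
  shows "0 \<le> top_sum w J g"
  using top_sum_mono[OF assms] by simp

text \<open>The maximisation problem attains top_sum: put weight ramp g k on the k-th largest value.\<close>
lemma top_sum_attained:
  assumes "finite J" "0 \<le> g"
  obtains phi where "\<forall>j\<in>J. 0 \<le> phi j \<and> phi j \<le> 1" "(\<Sum>j\<in>J. phi j) \<le> g"
    "(\<Sum>j\<in>J. w j * phi j) = top_sum w J g"
proof -
  obtain js where js: "distinct js" "set js = J" "desc_values w J = map w js"
    using desc_values_enumeration[OF assms(1)] .
  then have l: "length js = card J" using length_desc_values[of w J] by simp
  define phi where "phi = (\<lambda>j. ramp g (the_inv_into {..<length js} ((!) js) j))"
  have phi_nth: "phi (js ! k) = ramp g k" if "k < length js" for k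
    unfolding phi_def using the_inv_into_f_f[OF inj_on_nth[OF js(1)]] that by simp
  have "(\<Sum>j\<in>J. phi j) = (\<Sum>k<length js. ramp g k)"
    using js by (simp add: sum_over_enumeration phi_nth)
  then have "(\<Sum>j\<in>J. phi j) \<le> g" using sum_ramp[OF assms(2)] by simp
  moreover have "(\<Sum>j\<in>J. w j * phi j) = top_sum w J g"
    using js l by (simp add: sum_over_enumeration phi_nth top_sum_def)
  moreover have "\<forall>j\<in>J. 0 \<le> phi j \<and> phi j \<le> 1" unfolding phi_def using ramp_bounds by auto
  ultimately show ?thesis by (rule that[rotated])
qed

text \<open>The minimisation problem attains top_sum: z is the (\<lfloor>g\<rfloor>+1)-th largest value (0 if there is
  none) and y the excess over z.\<close>
lemma top_sum_cover_exists:
  assumes "finite J" "\<forall>j\<in>J. 0 \<le> w j" "0 \<le> g" "g \<le> real (card J)"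
  obtains y z where "0 \<le> z" "\<forall>j\<in>J. 0 \<le> y j \<and> w j \<le> y j + z"
    "(\<Sum>j\<in>J. y j) + g * z = top_sum w J g"
proof -
  obtain js where js: "distinct js" "set js = J" "desc_values w J = map w js"
    using desc_values_enumeration[OF assms(1)] .
  then have l: "length js = card J" using length_desc_values[of w J] by simp
  let ?v = "desc_values w J"
  define K where "K = nat \<lfloor>g\<rfloor>"
  have K: "real K \<le> g" "g < real K + 1" using assms(3) unfolding K_def by linarith+
  define z where "z = (if K < card J then ?v ! K else 0)"
  define y where "y = (\<lambda>j. max 0 (w j - z))"
  have excess: "max 0 (?v ! k - z) = (?v ! k - z) * ramp g k" if "k < card J" for k
  proof -
    consider "k < K" | "k = K" | "K < k" by linarith
    then show ?thesis
    proof cases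
      case 1
      then have "z \<le> ?v ! k"
        using that desc_values_antimono[of k K J w] desc_values_nonneg[OF assms(1,2) that]
        by (auto simp: z_def)
      then show ?thesis using 1 K by (simp add: ramp_def)
    next
      case 3
      then have "?v ! k \<le> z" using that desc_values_antimono[of K k J w] by (simp add: z_def)
      then show ?thesis using 3 K by (simp add: ramp_def)
    qed (use that in \<open>simp add: z_def\<close>)
  qed
  have "(\<Sum>j\<in>J. y j) = (\<Sum>k<card J. max 0 (?v ! k - z))"
    using l js(3) unfolding sum_over_enumeration[OF js(1,2)] y_def by (intro sum.cong) auto
  also have "\<dots> = (\<Sum>k<card J. (?v ! k - z) * ramp g k)" by (rule sum.cong) (simp_all add: excess)
  finally have "(\<Sum>j\<in>J. y j) + g * z
      = (\<Sum>k<card J. (?v ! k - z) * ramp g k) + (\<Sum>k<card J. ramp g k) * z"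
    using sum_ramp[OF assms(3), of "card J"] assms(4) by simp
  also have "\<dots> = (\<Sum>k<card J. (?v ! k - z) * ramp g k + ramp g k * z)"
    by (simp add: sum.distrib sum_distrib_right)
  also have "\<dots> = top_sum w J g"
    unfolding top_sum_def by (rule sum.cong) (simp_all add: algebra_simps)
  finally have "(\<Sum>j\<in>J. y j) + g * z = top_sum w J g" .
  moreover have "0 \<le> z" using desc_values_nonneg[OF assms(1,2)] by (simp add: z_def)
  moreover have "\<forall>j\<in>J. 0 \<le> y j \<and> w j \<le> y j + z" by (auto simp: y_def max_def)
  ultimately show ?thesis by (rule that[rotated 2])
qed

lemma cover_bounds_weighted_sum:
  fixes w y phi :: "'a \<Rightarrow> real"
  assumes "0 \<le> z" "\<forall>j\<in>J. 0 \<le> y j \<and> w j \<le> y j + z"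
    and "\<forall>j\<in>J. 0 \<le> phi j \<and> phi j \<le> p" "(\<Sum>j\<in>J. phi j) \<le> g * p"
  shows "(\<Sum>j\<in>J. w j * phi j) \<le> p * ((\<Sum>j\<in>J. y j) + g * z)"
proof -
  have "(\<Sum>j\<in>J. w j * phi j) \<le> (\<Sum>j\<in>J. y j * phi j + z * phi j)"
    by (rule sum_mono) (use assms in \<open>auto simp: distrib_right[symmetric] intro!: mult_right_mono\<close>)
  also have "\<dots> = (\<Sum>j\<in>J. y j * phi j) + z * (\<Sum>j\<in>J. phi j)"
    by (simp add: sum.distrib sum_distrib_left)
  also have "\<dots> \<le> (\<Sum>j\<in>J. y j * p) + z * (g * p)"
    using assms by (intro add_mono sum_mono mult_left_mono) auto
  also have "\<dots> = p * ((\<Sum>j\<in>J. y j) + g * z)"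
    unfolding sum_distrib_right[symmetric] by (simp add: algebra_simps)
  finally show ?thesis .
qed

lemma top_sum_le_cover:
  assumes "finite J" "0 \<le> g" "0 \<le> z" "\<forall>j\<in>J. 0 \<le> y j \<and> w j \<le> y j + z"
  shows "top_sum w J g \<le> (\<Sum>j\<in>J. y j) + g * z"
proof -
  obtain phi where "\<forall>j\<in>J. 0 \<le> phi j \<and> phi j \<le> 1" "(\<Sum>j\<in>J. phi j) \<le> g"
    "(\<Sum>j\<in>J. w j * phi j) = top_sum w J g"
    using top_sum_attained[OF assms(1,2)] .
  with cover_bounds_weighted_sum[OF assms(3,4), of phi 1 g] show ?thesis by simp
qed

lemma weighted_sum_le_top_sum:
  assumes "finite J" "\<forall>j\<in>J. 0 \<le> w j" "0 \<le> g" "g \<le> real (card J)"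
    and "\<forall>j\<in>J. 0 \<le> phi j \<and> phi j \<le> p" "(\<Sum>j\<in>J. phi j) \<le> g * p"
  shows "(\<Sum>j\<in>J. w j * phi j) \<le> p * top_sum w J g"
proof -
  obtain y z where "0 \<le> z" "\<forall>j\<in>J. 0 \<le> y j \<and> w j \<le> y j + z"
    "(\<Sum>j\<in>J. y j) + g * z = top_sum w J g"
    using top_sum_cover_exists[OF assms(1-4)] .
  with cover_bounds_weighted_sum[OF _ _ assms(5,6)] show ?thesis by metis
qed

section \<open>The robust counterpart and its dual\<close>

locale rlo_data =
  fixes m n :: nat and a :: "nat \<Rightarrow> nat \<Rightarrow> real" and b :: "nat \<Rightarrow> real"
    and Js :: "nat \<Rightarrow> nat set" and al :: "nat \<Rightarrow> nat \<Rightarrow> real" and xh :: "nat \<Rightarrow> real"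
  assumes Js_sub: "\<forall>i\<in>{1..m}. Js i \<subseteq> {1..n}"
    and al_nonneg: "\<forall>i\<in>{1..m}. \<forall>j\<in>Js i. al i j \<ge> 0"
begin

abbreviation s :: "nat \<Rightarrow> real" where
  "s \<equiv> slack n a b xh"

definition dev :: "nat \<Rightarrow> nat \<Rightarrow> real" where
  "dev i j = al i j * \<bar>xh j\<bar>"

definition protection :: "nat \<Rightarrow> real \<Rightarrow> real" where
  "protection i g = top_sum (dev i) (Js i) g"

definition robust_feasible ::
    "(nat \<Rightarrow> real) \<Rightarrow> (nat \<Rightarrow> nat \<Rightarrow> real) \<Rightarrow> (nat \<Rightarrow> nat \<Rightarrow> real) \<Rightarrow> (nat \<Rightarrow> real) \<Rightarrow> bool" where
  "robust_feasible G u y z \<longleftrightarrow>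
     (\<forall>i\<in>{1..m}. \<forall>j\<in>Js i. al i j * xh j + u i j \<ge> 0 \<and> - al i j * xh j + u i j \<ge> 0)
   \<and> (\<forall>i\<in>{1..m}. \<forall>j\<in>Js i. y i j + z i \<ge> u i j)
   \<and> (\<forall>i\<in>{1..m}. (\<Sum>j\<in>{1..n}. a i j * xh j) - (\<Sum>j\<in>Js i. y i j) - G i * z i \<ge> b i)
   \<and> (\<forall>i\<in>{1..m}. \<forall>j\<in>Js i. y i j \<ge> 0)
   \<and> (\<forall>i\<in>{1..m}. z i \<ge> 0)"

definition dual_feasible :: "(nat \<Rightarrow> real) \<Rightarrow> (nat \<Rightarrow> real) \<Rightarrow> (nat \<Rightarrow> real)
    \<Rightarrow> (nat \<Rightarrow> nat \<Rightarrow> real) \<Rightarrow> (nat \<Rightarrow> nat \<Rightarrow> real) \<Rightarrow> (nat \<Rightarrow> nat \<Rightarrow> real) \<Rightarrow> bool" where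
  "dual_feasible G c p phi lam mu \<longleftrightarrow>
     (\<Sum>i\<in>{1..m}. p i) = 1
   \<and> (\<forall>j\<in>{1..n}. (\<Sum>i\<in>{1..m}. a i j * p i)
          + (\<Sum>i\<in>{i\<in>{1..m}. j \<in> Js i}. al i j * (lam i j - mu i j)) = c j)
   \<and> (\<forall>i\<in>{1..m}. \<forall>j\<in>Js i. phi i j \<le> p i \<and> phi i j = lam i j + mu i j)
   \<and> (\<forall>i\<in>{1..m}. (\<Sum>j\<in>Js i. phi i j) \<le> G i * p i)
   \<and> (\<forall>i\<in>{1..m}. p i \<ge> 0)
   \<and> (\<forall>i\<in>{1..m}. \<forall>j\<in>Js i. phi i j \<ge> 0 \<and> lam i j \<ge> 0 \<and> mu i j \<ge> 0)"

lemma feasible_iff: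
  "feasible m n a b Js al xh G c u y z p phi lam mu \<longleftrightarrow>
     (\<Sum>j\<in>{1..n}. c j * xh j) = (\<Sum>i\<in>{1..m}. b i * p i)
     \<and> robust_feasible G u y z \<and> dual_feasible G c p phi lam mu
     \<and> (\<forall>i\<in>{1..m}. 0 \<le> G i \<and> G i \<le> real (card (Js i)))"
  unfolding feasible_def robust_feasible_def dual_feasible_def by auto

lemma finite_Js: "i \<in> {1..m} \<Longrightarrow> finite (Js i)"
  using Js_sub finite_subset[of "Js i" "{1..n}"] by auto

lemma dev_nonneg: "i \<in> {1..m} \<Longrightarrow> \<forall>j\<in>Js i. 0 \<le> dev i j"
  using al_nonneg by (simp add: dev_def)

lemma dev_eq_abs: "i \<in> {1..m} \<Longrightarrow> j \<in> Js i \<Longrightarrow> dev i j = \<bar>al i j * xh j\<bar>"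
  using al_nonneg by (simp add: dev_def abs_mult)

lemma Pval_eq_protection:
  "i \<in> {1..m} \<Longrightarrow> 0 \<le> g \<Longrightarrow> g \<le> real (card (Js i)) \<Longrightarrow> Pval (al i) (Js i) g xh = protection i g"
  unfolding protection_def dev_def by (rule Pval_eq_top_sum)

lemma robust_feasible_imp_protection_le_slack:
  assumes "robust_feasible G u y z" "i \<in> {1..m}" "0 \<le> G i"
  shows "protection i (G i) \<le> s i"
proof -
  have "\<forall>j\<in>Js i. 0 \<le> y i j \<and> dev i j \<le> y i j + z i"
    using assms(1,2) dev_eq_abs[OF assms(2)] unfolding robust_feasible_def by fastforce
  then have "protection i (G i) \<le> (\<Sum>j\<in>Js i. y i j) + G i * z i"
    using assms unfolding protection_def robust_feasible_def
    by (intro top_sum_le_cover[OF finite_Js]) auto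
  also have "\<dots> \<le> s i"
    using assms(1,2) unfolding robust_feasible_def slack_def by fastforce
  finally show ?thesis .
qed

lemma robust_feasible_exists:
  assumes "\<forall>i\<in>{1..m}. 0 \<le> G i \<and> G i \<le> real (card (Js i)) \<and> protection i (G i) \<le> s i"
  shows "\<exists>u y z. robust_feasible G u y z"
proof -
  have "\<forall>i\<in>{1..m}. \<exists>yi zi. 0 \<le> zi \<and> (\<forall>j\<in>Js i. 0 \<le> yi j \<and> dev i j \<le> yi j + zi)
      \<and> (\<Sum>j\<in>Js i. yi j) + G i * zi = protection i (G i)"
    using top_sum_cover_exists[OF finite_Js dev_nonneg] assms unfolding protection_def by metis
  then obtain y z where yz: "\<forall>i\<in>{1..m}. 0 \<le> z i
      \<and> (\<forall>j\<in>Js i. 0 \<le> y i j \<and> dev i j \<le> y i j + z i)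
      \<and> (\<Sum>j\<in>Js i. y i j) + G i * z i = protection i (G i)"
    by metis
  have "robust_feasible G dev y z"
    unfolding robust_feasible_def
  proof (intro conjI ballI)
    fix i assume i: "i \<in> {1..m}"
    show "(\<Sum>j\<in>{1..n}. a i j * xh j) - (\<Sum>j\<in>Js i. y i j) - G i * z i \<ge> b i"
      using yz assms i unfolding slack_def by fastforce
    fix j assume j: "j \<in> Js i"
    show "al i j * xh j + dev i j \<ge> 0" "- al i j * xh j + dev i j \<ge> 0"
      using dev_eq_abs[OF i j] by linarith+
  qed (use yz in auto)
  then show ?thesis by blast
qed

lemma dual_objective_eq:
  assumes "\<forall>j\<in>{1..n}. (\<Sum>i\<in>{1..m}. a i j * p i)
          + (\<Sum>i\<in>{i\<in>{1..m}. j \<in> Js i}. al i j * (lam i j - mu i j)) = c j"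
  shows "(\<Sum>j\<in>{1..n}. c j * xh j) - (\<Sum>i\<in>{1..m}. b i * p i)
       = (\<Sum>i\<in>{1..m}. p i * s i) + (\<Sum>i\<in>{1..m}. \<Sum>j\<in>Js i. al i j * xh j * (lam i j - mu i j))"
proof -
  have "(\<Sum>j\<in>{1..n}. c j * xh j) = (\<Sum>j\<in>{1..n}. \<Sum>i\<in>{1..m}. a i j * p i * xh j)
      + (\<Sum>j\<in>{1..n}. \<Sum>i\<in>{i\<in>{1..m}. j \<in> Js i}. al i j * xh j * (lam i j - mu i j))"
    unfolding sum.distrib[symmetric]
    by (rule sum.cong)
      (simp_all add: assms[rule_format, symmetric] sum_distrib_right sum_distrib_left algebra_simps)
  also have "(\<Sum>j\<in>{1..n}. \<Sum>i\<in>{1..m}. a i j * p i * xh j)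
      = (\<Sum>i\<in>{1..m}. p i * (\<Sum>j\<in>{1..n}. a i j * xh j))"
    by (subst sum.swap) (simp add: sum_distrib_left algebra_simps)
  also have "(\<Sum>j\<in>{1..n}. \<Sum>i\<in>{i\<in>{1..m}. j \<in> Js i}. al i j * xh j * (lam i j - mu i j))
      = (\<Sum>i\<in>{1..m}. \<Sum>j\<in>{j\<in>{1..n}. j \<in> Js i}. al i j * xh j * (lam i j - mu i j))"
    by (rule sum.swap_restrict[symmetric]) auto
  also have "\<dots> = (\<Sum>i\<in>{1..m}. \<Sum>j\<in>Js i. al i j * xh j * (lam i j - mu i j))"
  proof -
    have "{j\<in>{1..n}. j \<in> Js i} = Js i" if "i \<in> {1..m}" for i using Js_sub that by blast
    then show ?thesis by (intro sum.cong) simp_all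
  qed
  finally show ?thesis
    by (simp add: slack_def right_diff_distrib sum_subtractf mult.commute)
qed

lemma dual_penalty_le_protection:
  assumes "dual_feasible G c p phi lam mu" "\<forall>i\<in>{1..m}. 0 \<le> G i \<and> G i \<le> real (card (Js i))"
  shows "- (\<Sum>i\<in>{1..m}. \<Sum>j\<in>Js i. al i j * xh j * (lam i j - mu i j))
    \<le> (\<Sum>i\<in>{1..m}. p i * protection i (G i))"
  unfolding sum_negf[symmetric]
proof (rule sum_mono)
  fix i assume i: "i \<in> {1..m}"
  have "(\<Sum>j\<in>Js i. - (al i j * xh j * (lam i j - mu i j))) \<le> (\<Sum>j\<in>Js i. dev i j * phi i j)"
  proof (rule sum_mono)
    fix j assume j: "j \<in> Js i"
    have "0 \<le> lam i j" "0 \<le> mu i j" "phi i j = lam i j + mu i j"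
      using assms(1) i j unfolding dual_feasible_def by auto
    then show "- (al i j * xh j * (lam i j - mu i j)) \<le> dev i j * phi i j"
      using neg_mult_diff_le_abs_mult_add dev_eq_abs[OF i j] by simp
  qed
  also have "\<dots> \<le> p i * protection i (G i)"
  proof -
    have "\<forall>j\<in>Js i. 0 \<le> phi i j \<and> phi i j \<le> p i" "(\<Sum>j\<in>Js i. phi i j) \<le> G i * p i"
      using assms(1) i unfolding dual_feasible_def by blast+
    then show ?thesis
      using assms(2) i unfolding protection_def
      by (intro weighted_sum_le_top_sum[OF finite_Js dev_nonneg]) auto
  qed
  finally show "(\<Sum>j\<in>Js i. - (al i j * xh j * (lam i j - mu i j))) \<le> p i * protection i (G i)" .
qed

lemma feasible_has_tight_row:
  assumes "feasible m n a b Js al xh G c u y z p phi lam mu"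
  shows "\<exists>i\<in>{1..m}. s i = protection i (G i)"
proof -
  have obj: "(\<Sum>j\<in>{1..n}. c j * xh j) = (\<Sum>i\<in>{1..m}. b i * p i)"
    and robust: "robust_feasible G u y z" and dual: "dual_feasible G c p phi lam mu"
    and G: "\<forall>i\<in>{1..m}. 0 \<le> G i \<and> G i \<le> real (card (Js i))"
    using assms unfolding feasible_iff by auto
  have "(\<Sum>i\<in>{1..m}. p i * s i) + (\<Sum>i\<in>{1..m}. \<Sum>j\<in>Js i. al i j * xh j * (lam i j - mu i j)) = 0"
    using dual_objective_eq[of p lam mu c] dual obj unfolding dual_feasible_def by simp
  then have "(\<Sum>i\<in>{1..m}. p i * s i) \<le> (\<Sum>i\<in>{1..m}. p i * protection i (G i))"
    using dual_penalty_le_protection[OF dual G] by linarith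
  then have "(\<Sum>i\<in>{1..m}. p i * (s i - protection i (G i))) \<le> 0"
    by (simp add: right_diff_distrib sum_subtractf)
  moreover have "\<forall>i\<in>{1..m}. 0 \<le> p i \<and> 0 \<le> s i - protection i (G i)"
    using dual G robust_feasible_imp_protection_le_slack[OF robust]
    unfolding dual_feasible_def by fastforce
  ultimately have "\<exists>i\<in>{1..m}. 0 < p i \<and> s i - protection i (G i) = 0"
    using dual unfolding dual_feasible_def by (intro exists_zero_of_weighted_sum_nonpos) auto
  then show ?thesis by auto
qed

text \<open>lam and mu split phi by the sign of xh, so that al * xh * (lam - mu) = - dev * phi.\<close>
lemma dual_feasible_exists:
  assumes i: "i \<in> {1..m}" and "0 \<le> G i" and tight: "protection i (G i) = s i"
  shows "\<exists>c p phi lam mu. dual_feasible G c p phi lam mu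
           \<and> (\<Sum>j\<in>{1..n}. c j * xh j) = (\<Sum>k\<in>{1..m}. b k * p k)"
proof -
  obtain \<phi> where \<phi>: "\<forall>j\<in>Js i. 0 \<le> \<phi> j \<and> \<phi> j \<le> 1" "(\<Sum>j\<in>Js i. \<phi> j) \<le> G i"
    "(\<Sum>j\<in>Js i. dev i j * \<phi> j) = protection i (G i)"
    using top_sum_attained[OF finite_Js[OF i] assms(2)] unfolding protection_def by metis
  define p where "p = (\<lambda>k. if k = i then 1 else 0 :: real)"
  define phi where "phi = (\<lambda>k j. if k = i then \<phi> j else 0)"
  define lam where "lam = (\<lambda>k j. if xh j < 0 then phi k j else 0)"
  define mu where "mu = (\<lambda>k j. if xh j < 0 then 0 else phi k j)"
  define c where "c = (\<lambda>j. (\<Sum>k\<in>{1..m}. a k j * p k)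
      + (\<Sum>k\<in>{k\<in>{1..m}. j \<in> Js k}. al k j * (lam k j - mu k j)))"
  have c_eq: "\<forall>j\<in>{1..n}. (\<Sum>k\<in>{1..m}. a k j * p k)
      + (\<Sum>k\<in>{k\<in>{1..m}. j \<in> Js k}. al k j * (lam k j - mu k j)) = c j"
    by (simp add: c_def)
  have penalty: "al k j * xh j * (lam k j - mu k j) = - (dev k j * phi k j)" for k j
    unfolding lam_def mu_def dev_def by (simp add: abs_if)
  have "(\<Sum>k\<in>{1..m}. p k * s k) = (\<Sum>k\<in>{1..m}. if k = i then s k else 0)"
    by (rule sum.cong) (simp_all add: p_def)
  then have "(\<Sum>k\<in>{1..m}. p k * s k) = s i" using i by simp
  moreover have "(\<Sum>k\<in>{1..m}. \<Sum>j\<in>Js k. al k j * xh j * (lam k j - mu k j))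
      = (\<Sum>k\<in>{1..m}. if k = i then - (\<Sum>j\<in>Js i. dev i j * \<phi> j) else 0)"
    by (rule sum.cong) (simp_all add: penalty phi_def sum_negf)
  then have "(\<Sum>k\<in>{1..m}. \<Sum>j\<in>Js k. al k j * xh j * (lam k j - mu k j)) = - s i"
    using i \<phi>(3) tight by simp
  ultimately have "(\<Sum>j\<in>{1..n}. c j * xh j) = (\<Sum>k\<in>{1..m}. b k * p k)"
    using dual_objective_eq[OF c_eq] by simp
  moreover have "dual_feasible G c p phi lam mu"
    unfolding dual_feasible_def using i \<phi>(1,2) c_eq
    by (auto simp: p_def phi_def lam_def mu_def)
  ultimately show ?thesis by blast
qed

end

locale rlo_unique = rlo_data +
  assumes unique: "\<forall>i\<in>Ihat m n a b Js al xh. \<forall>g. 0 \<le> g \<and> g \<le> real (card (Js i)) \<and>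
                    slack n a b xh i = Pval (al i) (Js i) g xh \<longrightarrow> g = Gamma_low n a b Js al xh i"
begin

abbreviation I_hat :: "nat set" where
  "I_hat \<equiv> Ihat m n a b Js al xh"

abbreviation Gamma_lo :: "nat \<Rightarrow> real" where
  "Gamma_lo \<equiv> Gamma_low n a b Js al xh"

lemma I_hat_subset: "i \<in> I_hat \<Longrightarrow> i \<in> {1..m}"
  by (simp add: Ihat_def)

lemma eq_Gamma_lo_if_tight:
  "i \<in> I_hat \<Longrightarrow> 0 \<le> g \<Longrightarrow> g \<le> real (card (Js i)) \<Longrightarrow> protection i g = s i \<Longrightarrow> g = Gamma_lo i"
  using unique Pval_eq_protection[OF I_hat_subset] by metis

text \<open>The infimum defining Gamma_low is never analysed: uniqueness identifies it with the root
  given by the intermediate value theorem.\<close>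
lemma protection_Gamma_lo:
  assumes i: "i \<in> I_hat"
  shows "0 \<le> Gamma_lo i" "Gamma_lo i \<le> real (card (Js i))" "protection i (Gamma_lo i) = s i"
proof -
  have im: "i \<in> {1..m}" using I_hat_subset[OF i] .
  have "0 \<le> s i" "s i \<le> (\<Sum>j\<in>Js i. dev i j)" using i by (auto simp: Ihat_def dev_def)
  then have "\<exists>g\<ge>0. g \<le> real (card (Js i)) \<and> protection i g = s i"
    unfolding protection_def
    by (intro IVT') (simp_all add: top_sum_card[OF finite_Js[OF im]] continuous_on_top_sum)
  then obtain g where g: "0 \<le> g" "g \<le> real (card (Js i))" "protection i g = s i" by blast
  moreover have "g = Gamma_lo i" using eq_Gamma_lo_if_tight[OF i g] .
  ultimately show "0 \<le> Gamma_lo i" "Gamma_lo i \<le> real (card (Js i))" "protection i (Gamma_lo i) = s i"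
    by simp_all
qed

lemma protection_le_slack_iff:
  assumes i: "i \<in> I_hat" and g: "0 \<le> g" "g \<le> real (card (Js i))"
  shows "protection i g \<le> s i \<longleftrightarrow> g \<le> Gamma_lo i"
proof -
  have mono: "protection i g \<le> protection i g'" if "g \<le> g'" for g g'
    unfolding protection_def using I_hat_subset[OF i] that
    by (intro top_sum_mono[OF finite_Js dev_nonneg])
  show ?thesis
  proof
    assume le: "protection i g \<le> s i"
    show "g \<le> Gamma_lo i"
    proof (rule ccontr)
      assume "\<not> g \<le> Gamma_lo i"
      then have "protection i g = s i"
        using le mono[of "Gamma_lo i" g] protection_Gamma_lo[OF i] by simp
      then show False using eq_Gamma_lo_if_tight[OF i g] \<open>\<not> g \<le> Gamma_lo i\<close> by simp
    qed
  qed (use mono protection_Gamma_lo[OF i] in metis)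
qed

lemma in_Theta_if_protection_le_slack:
  assumes "\<forall>i\<in>{1..m}. 0 \<le> G i \<and> G i \<le> real (card (Js i)) \<and> protection i (G i) \<le> s i"
  shows "in_Theta m n a b Js al xh G"
  using assms protection_le_slack_iff I_hat_subset unfolding in_Theta_def by blast

lemma protection_le_slack_if_in_Theta:
  assumes "in_Theta m n a b Js al xh G" "\<forall>k\<in>{1..m}. 0 \<le> s k" "i \<in> {1..m}"
  shows "protection i (G i) \<le> s i"
proof (cases "i \<in> I_hat")
  case True
  then show ?thesis using assms protection_le_slack_iff unfolding in_Theta_def by auto
next
  case False
  have "protection i (G i) \<le> (\<Sum>j\<in>Js i. dev i j)"
    using assms unfolding protection_def in_Theta_def
    by (intro top_sum_le_sum[OF finite_Js dev_nonneg]) auto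
  also have "\<dots> < s i" using False assms(2,3) by (auto simp: Ihat_def dev_def)
  finally show ?thesis by simp
qed

lemma feasible_imp_in_Theta_tight:
  assumes "feasible m n a b Js al xh G c u y z p phi lam mu"
  shows "in_Theta m n a b Js al xh G \<and> (\<exists>i\<in>I_hat. G i = Gamma_lo i)"
proof -
  note parts = assms[unfolded feasible_iff]
  obtain i where i: "i \<in> {1..m}" "s i = protection i (G i)"
    using feasible_has_tight_row[OF assms] by blast
  have G: "0 \<le> G i" "G i \<le> real (card (Js i))" using parts i by auto
  have i_hat: "i \<in> I_hat"
    using i top_sum_nonneg[OF finite_Js dev_nonneg G(1)] top_sum_le_sum[OF finite_Js dev_nonneg G(2)]
    by (auto simp: Ihat_def protection_def dev_def[symmetric])
  have "in_Theta m n a b Js al xh G"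
    using parts robust_feasible_imp_protection_le_slack by (intro in_Theta_if_protection_le_slack) auto
  moreover have "G i = Gamma_lo i" using eq_Gamma_lo_if_tight[OF i_hat G] i(2) by simp
  ultimately show ?thesis using i_hat by blast
qed

lemma feasible_if_in_Theta_tight:
  assumes "\<forall>k\<in>{1..m}. b k \<le> (\<Sum>j\<in>{1..n}. a k j * xh j)"
    and "in_Theta m n a b Js al xh G" and "i \<in> I_hat" "G i = Gamma_lo i"
  shows "\<exists>c u y z p phi lam mu. feasible m n a b Js al xh G c u y z p phi lam mu"
proof -
  have G: "\<forall>k\<in>{1..m}. 0 \<le> G k \<and> G k \<le> real (card (Js k))"
    using assms(2) by (simp add: in_Theta_def)
  have "\<forall>k\<in>{1..m}. 0 \<le> s k" using assms(1) by (simp add: slack_def)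
  then obtain u y z where "robust_feasible G u y z"
    using robust_feasible_exists protection_le_slack_if_in_Theta[OF assms(2)] G by meson
  moreover obtain c p phi lam mu where "dual_feasible G c p phi lam mu"
      "(\<Sum>j\<in>{1..n}. c j * xh j) = (\<Sum>k\<in>{1..m}. b k * p k)"
    using dual_feasible_exists[OF I_hat_subset] protection_Gamma_lo assms(3,4) by metis
  ultimately show ?thesis using G unfolding feasible_iff by blast
qed

end

theorem lemma3:
  fixes m n :: nat and a :: "nat \<Rightarrow> nat \<Rightarrow> real" and b :: "nat \<Rightarrow> real"
    and Js :: "nat \<Rightarrow> nat set" and al :: "nat \<Rightarrow> nat \<Rightarrow> real" and xh :: "nat \<Rightarrow> real"
  assumes Js_sub: "\<forall>i\<in>{1..m}. Js i \<subseteq> {1..n}"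
    and al_nonneg: "\<forall>i\<in>{1..m}. \<forall>j\<in>Js i. al i j \<ge> 0"
    and unique: "\<forall>i\<in>Ihat m n a b Js al xh. \<forall>g. 0 \<le> g \<and> g \<le> real (card (Js i)) \<and>
                    slack n a b xh i = Pval (al i) (Js i) g xh \<longrightarrow> g = Gamma_low n a b Js al xh i"
  shows "(\<forall>G c u y z p phi lam mu. feasible m n a b Js al xh G c u y z p phi lam mu \<longrightarrow>
            in_Theta m n a b Js al xh G \<and>
            (\<exists>i\<in>Ihat m n a b Js al xh. G i = Gamma_low n a b Js al xh i))
       \<and> ((\<forall>i\<in>{1..m}. (\<Sum>j\<in>{1..n}. a i j * xh j) \<ge> b i) \<longrightarrow>
           (\<forall>G. in_Theta m n a b Js al xh G \<and>
                 (\<exists>i\<in>Ihat m n a b Js al xh. G i = Gamma_low n a b Js al xh i) \<longrightarrow>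
                 (\<exists>c u y z p phi lam mu. feasible m n a b Js al xh G c u y z p phi lam mu)))"
proof -
  interpret rlo_unique m n a b Js al xh
    using assms by unfold_locales
  show ?thesis
    using feasible_imp_in_Theta_tight feasible_if_in_Theta_tight by blast
qed

end
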